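(* Let $\alpha_1,\alpha_2>0$ satisfy $2(\alpha_1-\alpha_2)\ge \pi e$. Let $p$ be analytic in $\mathbb{D}$ with $p(0)=1$. If $$1+\alpha_1 zp'(z)+\alpha_2 z^2p''(z)\prec 1+\sinh^{-1} z,$$ then $p(z)\prec e^z$.
   Context: $\mathbb{D}$ is the open unit disk. For $g,h$ analytic in $\mathbb{D}$, $g\prec h$ means there is an analytic $w:\mathbb{D}\to\mathbb{D}$ with $w(0)=0$ and $g=h\circ w$. $\sinh^{-1}z$ denotes the branch of the inverse hyperbolic sine analytic in $\mathbb{D}$ with $\sinh^{-1}0=0$. *)

theory Defs
  imports "HOL-Complex_Analysis.Complex_Analysis"
begin

definition subordinate :: "(complex \<Rightarrow> complex) \<Rightarrow> (complex \<Rightarrow> complex) \<Rightarrow> bool" where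
  "subordinate g h \<longleftrightarrow>
     (\<exists>w. w holomorphic_on ball 0 1 \<and> w ` ball 0 1 \<subseteq> ball 0 1 \<and> w 0 = 0 \<and>
          (\<forall>z\<in>ball 0 1. g z = h (w z)))"

end

theory Submission
  imports Defs
begin

text \<open>
  Write \<open>q = z (\<alpha>\<^sub>2 z p'' + \<alpha>\<^sub>1 p')\<close>; the hypothesis says \<open>q = arsinh \<circ> w\<close>, and
  \<open>|arsinh w| < M = \<surd>(1 + (\<pi>/2)\<^sup>2)\<close> on the disk.  At a point \<open>\<zeta>\<close> where \<open>|p'|\<close> attains its
  maximum over \<open>|z| \<le> \<rho>\<close>, the radial derivative of \<open>|p'|\<close> is nonnegative
  (Jack's lemma), so \<open>\<rho> \<alpha>\<^sub>1 |p'(\<zeta>)| \<le> |q(\<zeta>)| < M\<close>.  Letting \<open>\<rho> \<rightarrow> 1\<close> gives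
  \<open>|p'| \<le> M/\<alpha>\<^sub>1 < 1/2\<close>, hence \<open>|p - 1| < 1/2\<close>, and \<open>Ln \<circ> p\<close> is a Schwarz function
  exhibiting \<open>p \<prec> exp\<close> because \<open>|Ln (1 + u)| \<le> 2 |u|\<close> for \<open>|u| < 1/2\<close>.
\<close>

lemma exp_one_gt: "27/10 < exp (1::real)"
  using e_approx_32 by (simp add: abs_if split: if_split_asm)

lemma sqrt_one_plus_pi_half_sq_less: "sqrt (1 + (pi/2)\<^sup>2) < pi * exp 1 / 4"
proof -
  have "3 * 3 \<le> pi * pi"
    using pi_gt3 by (intro mult_mono) auto
  then have "1 + (pi/2)\<^sup>2 < (pi * (27/10) / 4)\<^sup>2"
    by (simp add: power2_eq_square)
  also have "\<dots> < (pi * exp 1 / 4)\<^sup>2"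
    using exp_one_gt by (intro power_strict_mono) auto
  finally have "sqrt (1 + (pi/2)\<^sup>2) < sqrt ((pi * exp 1 / 4)\<^sup>2)"
    by (rule real_sqrt_less_mono)
  then show ?thesis
    using pi_gt_zero by simp
qed

lemma abs_Re_less_Re_csqrt:
  fixes w :: complex
  assumes "norm w < 1"
  shows "\<bar>Re w\<bar> < Re (csqrt (w\<^sup>2 + 1))"
proof -
  define s where "s = csqrt (w\<^sup>2 + 1)"
  have "s\<^sup>2 = w\<^sup>2 + 1"
    by (simp add: s_def)
  then have "Re (s * s) = Re (w * w + 1)"
    by (simp add: power2_eq_square)
  then have "(Re s)\<^sup>2 - (Im s)\<^sup>2 = 1 + (Re w)\<^sup>2 - (Im w)\<^sup>2"
    by (simp add: power2_eq_square)
  moreover have "(Re w)\<^sup>2 + (Im w)\<^sup>2 < 1"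
    using assms by (simp add: cmod_def)
  ultimately have "\<bar>Re w\<bar>\<^sup>2 < (Re s)\<^sup>2"
    unfolding power2_abs using zero_le_power2[of "Im s"] zero_le_power2[of "Re w"] by linarith
  then show ?thesis
    using Re_csqrt[of "w\<^sup>2 + 1"] unfolding s_def by (rule power2_less_imp_less)
qed

lemma norm_csqrt_less:
  fixes w :: complex
  assumes "norm w < 1"
  shows "norm (csqrt (w\<^sup>2 + 1)) < 3/2"
proof -
  have "(norm (csqrt (w\<^sup>2 + 1)))\<^sup>2 = norm (w\<^sup>2 + 1)"
    by (metis norm_power power2_csqrt)
  also have "\<dots> \<le> (norm w)\<^sup>2 + 1"
    by (metis norm_one norm_power norm_triangle_ineq)
  also have "\<dots> < (3/2)\<^sup>2"
    using assms abs_square_less_1[of "norm w"] by (simp add: power2_eq_square)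
  finally show ?thesis
    by (rule power2_less_imp_less) simp
qed

lemma norm_Ln_less:
  assumes "0 < Re u" and "exp (-1) < norm u" and "norm u < exp 1"
  shows "norm (Ln u) < sqrt (1 + (pi/2)\<^sup>2)"
proof -
  have "u \<noteq> 0"
    using assms(1) by auto
  have "\<bar>ln (norm u)\<bar> < 1"
    using assms(2,3) \<open>u \<noteq> 0\<close> ln_less_cancel_iff[of "exp (-1)" "norm u"]
      ln_less_cancel_iff[of "norm u" "exp 1"]
    by (simp add: abs_less_iff)
  then have "\<bar>Re (Ln u)\<bar> < 1"
    using \<open>u \<noteq> 0\<close> by simp
  then have "(Re (Ln u))\<^sup>2 < 1"
    by (simp add: abs_square_less_1)
  moreover have "(Im (Ln u))\<^sup>2 < (pi/2)\<^sup>2"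
    using Re_Ln_pos_lt_imp[OF assms(1)] by (metis abs_ge_zero power2_abs power_strict_mono pos2)
  ultimately show ?thesis
    unfolding cmod_def by (intro real_sqrt_less_mono) linarith
qed

lemma norm_arsinh_less:
  fixes w :: complex
  assumes "norm w < 1"
  shows "norm (arsinh w) < sqrt (1 + (pi/2)\<^sup>2)"
proof -
  define s where "s = csqrt (w\<^sup>2 + 1)"
  define u where "u = w + s"
  have arsinh_eq: "arsinh w = Ln u"
    by (simp add: arsinh_def u_def s_def csqrt_conv_powr)
  \<comment> \<open>\<open>u\<close> and \<open>s - w\<close> are reciprocal and both shorter than \<open>5/2\<close>, so \<open>1/e < |u| < e\<close>.\<close>
  have "u * (s - w) = 1"
    unfolding u_def s_def by (simp add: algebra_simps power2_eq_square[symmetric])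
  then have norm_u_inverse: "norm u * norm (s - w) = 1"
    by (metis norm_mult norm_one)
  have "norm s < 3/2"
    using norm_csqrt_less[OF assms] by (simp add: s_def)
  then have "norm u < 5/2" and "norm (s - w) < 5/2"
    using assms norm_triangle_ineq[of w s] norm_triangle_ineq4[of s w]
    unfolding u_def by linarith+
  have "2/5 < norm u"
  proof (rule ccontr)
    assume "\<not> 2/5 < norm u"
    then have "norm u * norm (s - w) \<le> 2/5 * norm (s - w)"
      by (intro mult_right_mono) auto
    then show False
      using norm_u_inverse \<open>norm (s - w) < 5/2\<close> by linarith
  qed
  moreover have "exp (-1) < (2/5::real)"
    using exp_one_gt by (simp add: exp_minus field_simps)
  moreover have "0 < Re u"
    using abs_Re_less_Re_csqrt[OF assms] by (simp add: u_def s_def)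
  ultimately show ?thesis
    using norm_Ln_less[of u] \<open>norm u < 5/2\<close> exp_one_gt by (simp add: arsinh_eq)
qed

text \<open>Jack's lemma: along the radius, \<open>t \<mapsto> Re (cnj (f \<zeta>) * f (t * \<zeta>))\<close> is maximal at \<open>t = 1\<close>,
  so its derivative there cannot be negative.\<close>

lemma Re_radial_derivative_nonneg_at_max:
  fixes f :: "complex \<Rightarrow> complex"
  assumes deriv: "(f has_field_derivative D) (at \<zeta>)"
    and max: "\<And>t. 0 \<le> t \<Longrightarrow> t \<le> 1 \<Longrightarrow> norm (f (of_real t * \<zeta>)) \<le> norm (f \<zeta>)"
  shows "0 \<le> Re (cnj (f \<zeta>) * (\<zeta> * D))"
proof (rule ccontr)
  assume neg: "\<not> 0 \<le> Re (cnj (f \<zeta>) * (\<zeta> * D))"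
  define F where "F = (\<lambda>t::real. Re (cnj (f \<zeta>) * f (of_real t * \<zeta>)))"
  have "((\<lambda>z. z * \<zeta>) has_field_derivative \<zeta>) (at 1)"
    by (auto intro!: derivative_eq_intros)
  from DERIV_chain2[OF _ this] deriv
  have "((\<lambda>z. cnj (f \<zeta>) * f (z * \<zeta>)) has_field_derivative cnj (f \<zeta>) * (\<zeta> * D)) (at 1)"
    by (auto intro!: derivative_eq_intros simp: mult.commute)
  then have "((\<lambda>t. cnj (f \<zeta>) * f (of_real t * \<zeta>))
      has_vector_derivative cnj (f \<zeta>) * (\<zeta> * D)) (at 1)"
    using has_vector_derivative_real_field[of "\<lambda>z. cnj (f \<zeta>) * f (z * \<zeta>)" _ 1] by simp
  then have "(F has_field_derivative Re (cnj (f \<zeta>) * (\<zeta> * D))) (at 1)"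
    unfolding F_def by (rule has_field_derivative_Re)
  then obtain d where "d > 0" and decreasing: "\<And>h. 0 < h \<Longrightarrow> h < d \<Longrightarrow> F 1 < F (1 - h)"
    using DERIV_neg_dec_left neg by (metis not_le)
  define h where "h = min (d/2) 1"
  have h: "0 < h" "h < d" "h \<le> 1"
    using \<open>d > 0\<close> by (auto simp: h_def)
  have "F (1 - h) \<le> norm (cnj (f \<zeta>) * f (of_real (1 - h) * \<zeta>))"
    unfolding F_def by (rule complex_Re_le_cmod)
  also have "\<dots> \<le> (norm (f \<zeta>))\<^sup>2"
    using max[of "1 - h"] h by (simp add: norm_mult mult_left_mono power2_eq_square)
  also have "\<dots> = F 1"
    using cmod_power2[of "f \<zeta>"] by (simp add: F_def power2_eq_square)
  finally show False
    using decreasing[of h] h by linarith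
qed

lemma norm_le_norm_of_Re_nonneg:
  fixes R X :: complex and a b :: real
  assumes "0 \<le> Re (cnj R * X)" and "0 \<le> a" and "0 \<le> b"
  shows "a * norm R \<le> norm (b * X + a * R)"
proof (cases "R = 0")
  case False
  have "a * (norm R)\<^sup>2 \<le> b * Re (cnj R * X) + a * (norm R)\<^sup>2"
    using assms by simp
  also have "\<dots> = Re (cnj R * (b * X + a * R))"
    using cmod_power2[of R] by (simp add: algebra_simps power2_eq_square)
  also have "\<dots> \<le> norm R * norm (b * X + a * R)"
    using complex_Re_le_cmod[of "cnj R * (b * X + a * R)"] by (simp add: norm_mult)
  finally show ?thesis
    using False by (metis power2_eq_square mult.left_commute mult_le_cancel_left_pos zero_less_norm_iff)
qed simp

lemma max_modulus_on_sphere: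
  fixes f :: "complex \<Rightarrow> complex"
  assumes "f holomorphic_on ball 0 1" and "0 < \<rho>" and "\<rho> < 1"
  obtains \<zeta> where "norm \<zeta> = \<rho>" and "\<And>z. norm z \<le> \<rho> \<Longrightarrow> norm (f z) \<le> norm (f \<zeta>)"
proof -
  have "cball 0 \<rho> \<subseteq> ball (0::complex) 1"
    using assms(3) by auto
  then have cont: "continuous_on (cball 0 \<rho>) f"
    using assms(1) holomorphic_on_imp_continuous_on holomorphic_on_subset by blast
  have "sphere (0::complex) \<rho> \<noteq> {}"
    using assms(2) by simp
  moreover have "continuous_on (sphere 0 \<rho>) (\<lambda>z. norm (f z))"
    using cont by (intro continuous_intros) (auto intro: continuous_on_subset)
  ultimately obtain \<zeta> where \<zeta>: "\<zeta> \<in> sphere 0 \<rho>"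
    and max: "\<And>z. z \<in> sphere 0 \<rho> \<Longrightarrow> norm (f z) \<le> norm (f \<zeta>)"
    using continuous_attains_sup[of "sphere 0 \<rho>" "\<lambda>z. norm (f z)"] by auto
  show thesis
  proof
    show "norm \<zeta> = \<rho>"
      using \<zeta> by simp
  next
    fix z :: complex
    assume "norm z \<le> \<rho>"
    show "norm (f z) \<le> norm (f \<zeta>)"
    proof (rule maximum_modulus_frontier[of f "cball 0 \<rho>"])
      show "f holomorphic_on interior (cball 0 \<rho>)"
        using holomorphic_on_subset[OF assms(1), of "ball 0 \<rho>"] assms(3) by (simp add: subset_ball)
    qed (use cont \<open>norm z \<le> \<rho>\<close> max assms(2) in auto)
  qed
qed

lemma scaled_norm_le_of_Euler_operator_bound:
  fixes r :: "complex \<Rightarrow> complex" and a b M :: real and z :: complex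
  assumes hol: "r holomorphic_on ball 0 1" and "0 \<le> a" and "0 \<le> b"
    and bound: "\<And>y. y \<in> ball 0 1 \<Longrightarrow>
      norm (y * (complex_of_real b * y * deriv r y + complex_of_real a * r y)) \<le> M"
    and "z \<in> ball 0 1"
  shows "a * norm (r z) \<le> M"
proof (rule field_le_mult_one_interval)
  fix t :: real
  assume "0 < t" "t < 1"
  define \<rho> where "\<rho> = max t ((1 + norm z) / 2)"
  have "0 < \<rho>" "\<rho> < 1" "norm z \<le> \<rho>" "t \<le> \<rho>"
    using \<open>0 < t\<close> \<open>t < 1\<close> \<open>z \<in> ball 0 1\<close> by (auto simp: \<rho>_def max_def)
  obtain \<zeta> where "norm \<zeta> = \<rho>" and max: "\<And>z. norm z \<le> \<rho> \<Longrightarrow> norm (r z) \<le> norm (r \<zeta>)"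
    using max_modulus_on_sphere[OF hol \<open>0 < \<rho>\<close> \<open>\<rho> < 1\<close>] by blast
  have \<zeta>: "\<zeta> \<in> ball 0 1"
    using \<open>norm \<zeta> = \<rho>\<close> \<open>\<rho> < 1\<close> by simp
  have "0 \<le> Re (cnj (r \<zeta>) * (\<zeta> * deriv r \<zeta>))"
  proof (rule Re_radial_derivative_nonneg_at_max)
    show "(r has_field_derivative deriv r \<zeta>) (at \<zeta>)"
      using hol \<zeta> by (intro holomorphic_derivI) auto
    show "norm (r (of_real s * \<zeta>)) \<le> norm (r \<zeta>)" if "0 \<le> s" "s \<le> 1" for s
      using that \<open>norm \<zeta> = \<rho>\<close> \<open>0 < \<rho>\<close> by (intro max) (simp add: norm_mult mult_left_le_one_le)
  qed
  then have "a * norm (r \<zeta>) \<le> norm (b * (\<zeta> * deriv r \<zeta>) + a * r \<zeta>)"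
    using \<open>0 \<le> a\<close> \<open>0 \<le> b\<close> by (rule norm_le_norm_of_Re_nonneg)
  then have "\<rho> * (a * norm (r \<zeta>)) \<le> M"
    using bound[OF \<zeta>] \<open>norm \<zeta> = \<rho>\<close> \<open>0 < \<rho>\<close>
    by (smt (verit, best) mult.assoc mult_left_mono norm_mult)
  moreover have "t * (a * norm (r z)) \<le> \<rho> * (a * norm (r \<zeta>))"
    using max[OF \<open>norm z \<le> \<rho>\<close>] \<open>0 < t\<close> \<open>t \<le> \<rho>\<close> \<open>0 \<le> a\<close>
    by (intro mult_mono mult_left_mono) auto
  ultimately show "t * (a * norm (r z)) \<le> M"
    by linarith
qed

lemma subordinate_exp_if_norm_diff_one_less:
  assumes hol: "p holomorphic_on ball 0 1" and "p 0 = 1"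
    and near_one: "\<And>z. z \<in> ball 0 1 \<Longrightarrow> norm (p z - 1) < 1/2"
  shows "subordinate p exp"
proof -
  have Re_pos: "0 < Re (p z)" if "z \<in> ball 0 1" for z
    using near_one[OF that] abs_Re_le_cmod[of "p z - 1"] by simp
  show ?thesis
    unfolding subordinate_def
  proof (intro exI[of _ "\<lambda>z. Ln (p z)"] conjI ballI subsetI)
    show "(\<lambda>z. Ln (p z)) holomorphic_on ball 0 1"
      using Re_pos hol by (intro holomorphic_on_Ln') (force simp: complex_nonpos_Reals_iff)+
    show "Ln (p 0) = 0"
      using \<open>p 0 = 1\<close> by simp
  next
    fix y
    assume "y \<in> (\<lambda>z. Ln (p z)) ` ball 0 1"
    then obtain z where z: "z \<in> ball 0 1" and "y = Ln (1 + (p z - 1))"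
      by auto
    then show "y \<in> ball 0 1"
      using norm_Ln_le[OF near_one[OF z]] near_one[OF z] by simp
  next
    fix z :: complex
    assume "z \<in> ball 0 1"
    then have "p z \<noteq> 0"
      using Re_pos by fastforce
    then show "p z = exp (Ln (p z))"
      by simp
  qed
qed

lemma subordinate_exp_if_norm_deriv_le:
  assumes hol: "p holomorphic_on ball 0 1" and "p 0 = 1" and "K < 1/2"
    and deriv_le: "\<And>z. z \<in> ball 0 1 \<Longrightarrow> norm (deriv p z) \<le> K"
  shows "subordinate p exp"
proof (rule subordinate_exp_if_norm_diff_one_less[OF hol \<open>p 0 = 1\<close>])
  fix z :: complex
  assume z: "z \<in> ball 0 1"
  have "norm (deriv p 0) \<le> K"
    using deriv_le by simp
  then have "0 \<le> K"
    by (rule order_trans[OF norm_ge_zero])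
  have "norm (p z - p 0) \<le> K * norm (z - 0)"
    using hol deriv_le z
    by (intro field_differentiable_bound[of "ball 0 1" p "deriv p"]) (auto intro: holomorphic_derivI)
  also have "\<dots> \<le> K"
    using z \<open>0 \<le> K\<close> by (intro mult_left_le) auto
  finally show "norm (p z - 1) < 1/2"
    using \<open>p 0 = 1\<close> \<open>K < 1/2\<close> by simp
qed

theorem theorem4p9:
  fixes \<alpha>1 \<alpha>2 :: real and p :: "complex \<Rightarrow> complex"
  assumes "\<alpha>1 > 0" and "\<alpha>2 > 0" and "2 * (\<alpha>1 - \<alpha>2) \<ge> pi * exp 1"
    and "p holomorphic_on ball 0 1" and "p 0 = 1"
    and "subordinate
           (\<lambda>z. 1 + complex_of_real \<alpha>1 * z * deriv p z
                  + complex_of_real \<alpha>2 * z\<^sup>2 * deriv (deriv p) z)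
           (\<lambda>z. 1 + arsinh z)"
  shows "subordinate p exp"
proof -
  define M where "M = sqrt (1 + (pi/2)\<^sup>2)"
  obtain w where w_maps: "w ` ball 0 1 \<subseteq> ball 0 1"
    and w_eq: "\<forall>z\<in>ball 0 1. 1 + complex_of_real \<alpha>1 * z * deriv p z
                  + complex_of_real \<alpha>2 * z\<^sup>2 * deriv (deriv p) z = 1 + arsinh (w z)"
    using assms(6) unfolding subordinate_def by blast
  have deriv_hol: "deriv p holomorphic_on ball 0 1"
    using assms(4) by (auto intro: holomorphic_deriv)
  have operator_bound: "norm (z * (\<alpha>2 * z * deriv (deriv p) z + \<alpha>1 * deriv p z)) \<le> M"
    if "z \<in> ball 0 1" for z :: complex
  proof -
    have "z * (\<alpha>2 * z * deriv (deriv p) z + \<alpha>1 * deriv p z) = arsinh (w z)"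
      using w_eq that by (auto simp: algebra_simps power2_eq_square)
    moreover have "norm (w z) < 1"
      using w_maps that by (auto simp: image_subset_iff)
    ultimately show ?thesis
      using norm_arsinh_less[of "w z"] by (simp add: M_def)
  qed
  have scaled_bound: "\<alpha>1 * norm (deriv p z) \<le> M" if "z \<in> ball 0 1" for z
    using scaled_norm_le_of_Euler_operator_bound[OF deriv_hol _ _ operator_bound that] assms(1,2)
    by simp
  have "M < \<alpha>1 / 2"
    using sqrt_one_plus_pi_half_sq_less assms(2,3) by (simp add: M_def)
  show ?thesis
  proof (rule subordinate_exp_if_norm_deriv_le[OF assms(4,5)])
    show "M / \<alpha>1 < 1/2"
      using \<open>M < \<alpha>1 / 2\<close> assms(1) by (simp add: field_simps)
    show "norm (deriv p z) \<le> M / \<alpha>1" if "z \<in> ball 0 1" for z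
      using scaled_bound[OF that] assms(1) by (simp add: field_simps)
  qed
qed

end
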